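(* Define the relation $\succeq^1$ on $\mathcal{A}$ by $\mathbf{A}\succeq^1\mathbf{B}\iff\nu(\mathbf{A})\ge\nu(\mathbf{B})$, where for $\mathbf{A}=[a_{ij}]$ of size $n$, $\nu(\mathbf{A})=\min_{1\le i<j<k\le n}\max\{a_{ij}a_{jk}/a_{ik},\ a_{ik}/(a_{ij}a_{jk})\}$. Then $\succeq^1$ is an inconsistency ranking that satisfies IIP, HTE, SI, MON and RED, but does not satisfy PR.
   Context: A pairwise comparison matrix of size $n$ is a matrix $\mathbf{A}=[a_{ij}]\in\mathbb{R}^{n\times n}$ with all entries positive and $a_{ji}=1/a_{ij}$ for all $i,j$. Let $\mathcal{A}$ denote the set of all pairwise comparison matrices of all sizes $n\ge 3$. For $\mathbf{A}\in\mathcal{A}$ of size $n$ and $3\le m\le n$, a submatrix of $\mathbf{A}$ is a matrix $\mathbf{B}=[b_{ij}]$ of size $m$ with $b_{ij}=a_{\sigma(i)\sigma(j)}$ for some strictly increasing map $\sigma:\{1,\dots,m\}\to\{1,\dots,n\}$. A triad is a pairwise comparison matrix of size $3$; a triad of $\mathbf{A}$ is a submatrix of $\mathbf{A}$ of size $3$ (when $n=3$, $\mathbf{A}$ is its own unique triad). A triad $\mathbf{T}$ is written $\mathbf{T}=(t_1;t_2;t_3)$, meaning $t_{12}=t_1$, $t_{13}=t_2$, $t_{23}=t_3$ (the remaining entries are determined by reciprocity); $\mathbf{T}^\top$ denotes its transpose, i.e. the triad $(1/t_1;1/t_2;1/t_3)$. An inconsistency ranking is a complete and transitive binary relation $\succeq$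 on $\mathcal{A}$; $\mathbf{A}\sim\mathbf{B}$ means $\mathbf{A}\succeq\mathbf{B}$ and $\mathbf{B}\succeq\mathbf{A}$; $\mathbf{A}\preceq\mathbf{B}$ means $\mathbf{B}\succeq\mathbf{A}$. Properties of an inconsistency ranking $\succeq$: (PR) for all $s_2,t_2\ge 1$: $(1;s_2;1)\succeq(1;t_2;1)\iff s_2\le t_2$. (IIP) $\mathbf{T}\sim\mathbf{T}^\top$ for every triad $\mathbf{T}$. (HTE) $(1;t_2;t_3)\sim(1;t_2/t_3;1)$ for all $t_2,t_3>0$. (SI) $(t_1;t_2;t_3)\sim(kt_1;k^2t_2;kt_3)$ for all $t_1,t_2,t_3>0$ and all $k>0$. (MON) $\mathbf{A}\preceq\mathbf{T}$ for every $\mathbf{A}\in\mathcal{A}$ and every triad $\mathbf{T}$ of $\mathbf{A}$. (RED) every $\mathbf{A}\in\mathcal{A}$ has a triad $\mathbf{T}$ with $\mathbf{A}\sim\mathbf{T}$. *)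

theory Defs
  imports Complex_Main
begin

text \<open>A matrix of size n is represented as a pair (n, a) with entries a i j for
  0-based indices i, j < n.  To make the representation canonical, entries outside
  the index range are required to be 1.\<close>

type_synonym pcm = "nat \<times> (nat \<Rightarrow> nat \<Rightarrow> real)"

definition pcm_set :: "pcm set" where
  "pcm_set = {(n, a). 3 \<le> n \<and>
      (\<forall>i<n. \<forall>j<n. 0 < a i j \<and> a j i = 1 / a i j) \<and>
      (\<forall>i j. \<not> (i < n \<and> j < n) \<longrightarrow> a i j = 1)}"

definition triad :: "real \<Rightarrow> real \<Rightarrow> real \<Rightarrow> pcm" where
  "triad t1 t2 t3 = (3, \<lambda>i j.
      if i = 0 \<and> j = 1 then t1 else if i = 1 \<and> j = 0 then 1 / t1
      else if i = 0 \<and> j = 2 then t2 else if i = 2 \<and> j = 0 then 1 / t2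
      else if i = 1 \<and> j = 2 then t3 else if i = 2 \<and> j = 1 then 1 / t3
      else 1)"

definition submatrix :: "pcm \<Rightarrow> nat \<Rightarrow> (nat \<Rightarrow> nat) \<Rightarrow> pcm" where
  "submatrix A m \<sigma> = (m, \<lambda>i j. if i < m \<and> j < m then snd A (\<sigma> i) (\<sigma> j) else 1)"

definition triads_of :: "pcm \<Rightarrow> pcm set" where
  "triads_of A = {submatrix A 3 \<sigma> | \<sigma>.
      strict_mono_on {..<3} \<sigma> \<and> (\<forall>i<3. \<sigma> i < fst A)}"

definition inconsistency_ranking :: "(pcm \<Rightarrow> pcm \<Rightarrow> bool) \<Rightarrow> bool" where
  "inconsistency_ranking R \<longleftrightarrow>
     (\<forall>A\<in>pcm_set. \<forall>B\<in>pcm_set. R A B \<or> R B A) \<and>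
     (\<forall>A\<in>pcm_set. \<forall>B\<in>pcm_set. \<forall>C\<in>pcm_set. R A B \<longrightarrow> R B C \<longrightarrow> R A C)"

definition rsim :: "(pcm \<Rightarrow> pcm \<Rightarrow> bool) \<Rightarrow> pcm \<Rightarrow> pcm \<Rightarrow> bool" where
  "rsim R A B \<longleftrightarrow> R A B \<and> R B A"

definition PR :: "(pcm \<Rightarrow> pcm \<Rightarrow> bool) \<Rightarrow> bool" where
  "PR R \<longleftrightarrow> (\<forall>s2 t2. 1 \<le> s2 \<longrightarrow> 1 \<le> t2 \<longrightarrow>
       (R (triad 1 s2 1) (triad 1 t2 1) \<longleftrightarrow> s2 \<le> t2))"

definition IIP :: "(pcm \<Rightarrow> pcm \<Rightarrow> bool) \<Rightarrow> bool" where
  "IIP R \<longleftrightarrow> (\<forall>t1 t2 t3. 0 < t1 \<longrightarrow> 0 < t2 \<longrightarrow> 0 < t3 \<longrightarrow>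
       rsim R (triad t1 t2 t3) (triad (1/t1) (1/t2) (1/t3)))"

definition HTE :: "(pcm \<Rightarrow> pcm \<Rightarrow> bool) \<Rightarrow> bool" where
  "HTE R \<longleftrightarrow> (\<forall>t2 t3. 0 < t2 \<longrightarrow> 0 < t3 \<longrightarrow>
       rsim R (triad 1 t2 t3) (triad 1 (t2 / t3) 1))"

definition SI :: "(pcm \<Rightarrow> pcm \<Rightarrow> bool) \<Rightarrow> bool" where
  "SI R \<longleftrightarrow> (\<forall>t1 t2 t3 k. 0 < t1 \<longrightarrow> 0 < t2 \<longrightarrow> 0 < t3 \<longrightarrow> 0 < k \<longrightarrow>
       rsim R (triad t1 t2 t3) (triad (k * t1) (k^2 * t2) (k * t3)))"

definition MON :: "(pcm \<Rightarrow> pcm \<Rightarrow> bool) \<Rightarrow> bool" where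
  "MON R \<longleftrightarrow> (\<forall>A\<in>pcm_set. \<forall>T\<in>triads_of A. R T A)"

definition RED :: "(pcm \<Rightarrow> pcm \<Rightarrow> bool) \<Rightarrow> bool" where
  "RED R \<longleftrightarrow> (\<forall>A\<in>pcm_set. \<exists>T\<in>triads_of A. rsim R A T)"

definition nu :: "pcm \<Rightarrow> real" where
  "nu A = Min {max (snd A i j * snd A j k / snd A i k) (snd A i k / (snd A i j * snd A j k))
               | i j k. i < j \<and> j < k \<and> k < fst A}"

definition rank1 :: "pcm \<Rightarrow> pcm \<Rightarrow> bool" where
  "rank1 A B \<longleftrightarrow> nu A \<ge> nu B"

end

theory Submission
  imports Defs
begin

text \<open>On a triad, \<nu> is its single local value max(t1 t3 / t2, t2 / (t1 t3)), which is invariant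
  under transposition, under the HTE move and under the SI scaling; this gives IIP, HTE and SI.
  For an arbitrary matrix \<nu> is a minimum over its triads, so it is at most the value of each
  triad (MON) and equal to the value of a minimising one (RED).  PR fails because \<nu> increases
  with t2 on the triads (1; t2; 1), t2 \<ge> 1, whereas PR asks them to be ranked decreasingly.\<close>

definition triad_value :: "pcm \<Rightarrow> nat \<Rightarrow> nat \<Rightarrow> nat \<Rightarrow> real" where
  "triad_value A i j k =
     max (snd A i j * snd A j k / snd A i k) (snd A i k / (snd A i j * snd A j k))"

definition increasing_triples :: "nat \<Rightarrow> (nat \<times> nat \<times> nat) set" where
  "increasing_triples n = {(i, j, k). i < j \<and> j < k \<and> k < n}"

lemma finite_increasing_triples: "finite (increasing_triples n)"
proof (rule finite_subset)
  show "increasing_triples n \<subseteq> {..<n} \<times> {..<n} \<times> {..<n}"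
    by (auto simp: increasing_triples_def)
qed simp

lemma nu_eq_Min_triad_value:
  "nu A = Min ((\<lambda>(i, j, k). triad_value A i j k) ` increasing_triples (fst A))"
  unfolding nu_def triad_value_def increasing_triples_def
  by (rule arg_cong[where f = Min]) (auto intro!: image_eqI)

lemma nu_le_triad_value:
  assumes "i < j" "j < k" "k < fst A"
  shows "nu A \<le> triad_value A i j k"
  unfolding nu_eq_Min_triad_value
  by (rule Min_le) (use assms finite_increasing_triples in \<open>force simp: increasing_triples_def\<close>)+

lemma nu_attained:
  assumes "3 \<le> fst A"
  obtains i j k where "i < j" "j < k" "k < fst A" "nu A = triad_value A i j k"
proof -
  have "(0, 1, 2) \<in> increasing_triples (fst A)"
    using assms by (simp add: increasing_triples_def)
  then have "nu A \<in> (\<lambda>(i, j, k). triad_value A i j k) ` increasing_triples (fst A)"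
    unfolding nu_eq_Min_triad_value by (intro Min_in finite_imageI finite_increasing_triples) auto
  then show ?thesis
    using that by (auto simp: increasing_triples_def)
qed

lemma nu_of_size_3:
  assumes "fst A = 3"
  shows "nu A = triad_value A 0 1 2"
proof -
  have "increasing_triples (fst A) = {(0, 1, 2)}"
    using assms by (auto simp: increasing_triples_def)
  then show ?thesis
    by (simp add: nu_eq_Min_triad_value)
qed

lemma nu_submatrix: "nu (submatrix A 3 \<sigma>) = triad_value A (\<sigma> 0) (\<sigma> 1) (\<sigma> 2)"
  by (simp add: nu_of_size_3 submatrix_def triad_value_def)

lemma nu_triad: "nu (triad t1 t2 t3) = max (t1 * t3 / t2) (t2 / (t1 * t3))"
  by (simp add: nu_of_size_3 triad_def triad_value_def mult.commute)

lemma rsim_rank1_iff: "rsim rank1 A B \<longleftrightarrow> nu A = nu B"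
  by (auto simp: rsim_def rank1_def)

lemma triad_of_increasing_triple:
  assumes "i < j" "j < k" "k < fst A"
  shows "submatrix A 3 (\<lambda>x. if x = 0 then i else if x = 1 then j else k) \<in> triads_of A"
proof -
  let ?\<sigma> = "\<lambda>x::nat. if x = 0 then i else if x = 1 then j else k"
  have "strict_mono_on {..<3} ?\<sigma>"
    using assms by (auto simp: strict_mono_on_def less_Suc_eq numeral_3_eq_3)
  moreover have "\<forall>x<3. ?\<sigma> x < fst A"
    using assms by auto
  ultimately show ?thesis
    unfolding triads_of_def by blast
qed

lemma inconsistency_ranking_rank1: "inconsistency_ranking rank1"
  unfolding inconsistency_ranking_def rank1_def by auto

lemma IIP_rank1: "IIP rank1"
  unfolding IIP_def rsim_rank1_iff nu_triad by (auto simp: field_simps max_def)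

lemma HTE_rank1: "HTE rank1"
  unfolding HTE_def rsim_rank1_iff nu_triad by (auto simp: field_simps max_def)

lemma SI_rank1: "SI rank1"
  unfolding SI_def rsim_rank1_iff nu_triad by (auto simp: field_simps max_def power2_eq_square)

lemma MON_rank1: "MON rank1"
  unfolding MON_def rank1_def
proof (intro ballI)
  fix A T
  assume "T \<in> triads_of A"
  then obtain \<sigma> where T: "T = submatrix A 3 \<sigma>"
    and mono: "strict_mono_on {..<3} \<sigma>" and bounded: "\<forall>i<3. \<sigma> i < fst A"
    by (auto simp: triads_of_def)
  have "\<sigma> 0 < \<sigma> 1" "\<sigma> 1 < \<sigma> 2"
    using mono by (auto simp: strict_mono_on_def)
  with bounded show "nu A \<le> nu T"
    unfolding T nu_submatrix by (intro nu_le_triad_value) auto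
qed

lemma RED_rank1: "RED rank1"
  unfolding RED_def
proof
  fix A
  assume "A \<in> pcm_set"
  then have "3 \<le> fst A"
    by (simp add: pcm_set_def split_beta)
  then obtain i j k where ijk: "i < j" "j < k" "k < fst A" and min: "nu A = triad_value A i j k"
    by (rule nu_attained)
  show "\<exists>T\<in>triads_of A. rsim rank1 A T"
  proof
    show "rsim rank1 A (submatrix A 3 (\<lambda>x. if x = 0 then i else if x = 1 then j else k))"
      using min by (simp add: rsim_rank1_iff nu_submatrix)
  qed (rule triad_of_increasing_triple[OF ijk])
qed

lemma not_PR_rank1: "\<not> PR rank1"
proof
  assume "PR rank1"
  then have "rank1 (triad 1 1 1) (triad 1 2 1)"
    unfolding PR_def by force
  then show False
    by (simp add: rank1_def nu_triad)
qed

theorem mainTheorem2: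
  shows "inconsistency_ranking rank1 \<and> IIP rank1 \<and> HTE rank1 \<and> SI rank1 \<and>
         MON rank1 \<and> RED rank1 \<and> \<not> PR rank1"
  using inconsistency_ranking_rank1 IIP_rank1 HTE_rank1 SI_rank1 MON_rank1 RED_rank1 not_PR_rank1
  by blast

end
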